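(* Let $G$ be a (nonempty) subgraph of $Q_n$ with average degree $d$. For each vertex $v$ of $G$, let $|L_G(v)|$ denote the maximum length of an increasing geodesic in $G$ ending at $v$. Then $$\sum_{v\in V(G)} |L_G(v)| \ge d\,|V(G)|.$$
   Context: The hypercube $Q_n$ has vertex set $\{0,1\}^n$, two vertices adjacent iff they differ in exactly one coordinate; the direction of an edge is that coordinate in $\{1,\dots,n\}$. A path $P=x_1x_2\ldots x_l$ in $Q_n$ is an increasing geodesic if the directions of the edges $x_ix_{i+1}$ strictly increase with $i$; it ends at $x_l$. The single-vertex path $x_1$ is an increasing geodesic of length $0$ ending at $x_1$. Length means number of edges. The average degree of $G$ is $2|E(G)|/|V(G)|$. *)

theory Defs
  imports Complex_Main
begin

text \<open>Vertices of Q_n: a vertex x in {0,1}^n is encoded as the set of coordinates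
  i in {1..n} with x_i = 1, i.e. as a subset of {1..n}.\<close>

definition hc_vertex :: "nat \<Rightarrow> nat set \<Rightarrow> bool" where
  "hc_vertex n x \<longleftrightarrow> x \<subseteq> {1..n}"

definition hc_adj :: "nat \<Rightarrow> nat set \<Rightarrow> nat set \<Rightarrow> bool" where
  "hc_adj n x y \<longleftrightarrow> hc_vertex n x \<and> hc_vertex n y \<and> card ((x - y) \<union> (y - x)) = 1"

definition direction :: "nat set \<Rightarrow> nat set \<Rightarrow> nat" where
  "direction x y = the_elem ((x - y) \<union> (y - x))"

definition hc_subgraph :: "nat \<Rightarrow> nat set set \<Rightarrow> nat set set set \<Rightarrow> bool" where
  "hc_subgraph n V E \<longleftrightarrow> (\<forall>x\<in>V. hc_vertex n x) \<and>
     E \<subseteq> {{x, y} | x y. x \<in> V \<and> y \<in> V \<and> hc_adj n x y}"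

definition inc_geodesic :: "nat set set \<Rightarrow> nat set set set \<Rightarrow> nat set list \<Rightarrow> bool" where
  "inc_geodesic V E xs \<longleftrightarrow> xs \<noteq> [] \<and> set xs \<subseteq> V \<and>
     (\<forall>i. i + 1 < length xs \<longrightarrow> {xs ! i, xs ! (i + 1)} \<in> E) \<and>
     (\<forall>i. i + 2 < length xs \<longrightarrow>
        direction (xs ! i) (xs ! (i + 1)) < direction (xs ! (i + 1)) (xs ! (i + 2)))"

definition max_inc_len :: "nat set set \<Rightarrow> nat set set set \<Rightarrow> nat set \<Rightarrow> nat" where
  "max_inc_len V E v = Max {length xs - 1 | xs. inc_geodesic V E xs \<and> last xs = v}"

definition avg_degree :: "nat set set \<Rightarrow> nat set set set \<Rightarrow> real" where
  "avg_degree V E = 2 * real (card E) / real (card V)"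

end

theory Submission
  imports Defs
begin

text \<open>Let \<open>h\<^sub>k(v)\<close> be the maximal length of an increasing geodesic ending at \<open>v\<close> whose
  directions are all at most \<open>k\<close>. Going from \<open>k\<close> to \<open>k + 1\<close>, every edge \<open>{v, w}\<close> of
  direction \<open>k + 1\<close> raises \<open>h(v) + h(w)\<close> by at least two, because the longer of the two
  geodesics ending at \<open>v\<close> and \<open>w\<close> extends across the edge. Summing over all directions,
  \<open>\<Sum>\<^sub>v |L(v)| \<ge> \<Sum>\<^sub>v h\<^sub>n(v) \<ge> 2|E| = d |V|\<close>.\<close>

definition flip_coord :: "nat set \<Rightarrow> nat \<Rightarrow> nat set" where
  "flip_coord v j = (if j \<in> v then v - {j} else insert j v)"

lemma flip_coord_flip_coord [simp]: "flip_coord (flip_coord v j) j = v"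
  unfolding flip_coord_def by auto

lemma direction_flip_coord [simp]:
  "direction v (flip_coord v j) = j" "direction (flip_coord v j) v = j"
proof -
  have "(v - flip_coord v j) \<union> (flip_coord v j - v) = {j}"
    unfolding flip_coord_def by auto
  then show "direction v (flip_coord v j) = j" "direction (flip_coord v j) v = j"
    unfolding direction_def by (simp_all add: Un_commute)
qed

lemma flip_coord_eq_iff [simp]: "flip_coord v j = flip_coord v j' \<longleftrightarrow> j = j'"
  by (metis direction_flip_coord(1))

lemma hc_adj_flip_coord:
  assumes "hc_adj n v w"
  obtains j where "j \<in> {1..n}" "w = flip_coord v j"
proof -
  obtain j where j: "(v - w) \<union> (w - v) = {j}"
    using assms unfolding hc_adj_def by (meson card_1_singletonE)
  then have "x \<in> w \<longleftrightarrow> (x \<in> v \<longleftrightarrow> x \<noteq> j)" for x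
    by (auto simp: set_eq_iff)
  then have "w = flip_coord v j"
    unfolding flip_coord_def by auto
  moreover have "j \<in> {1..n}"
    using assms j unfolding hc_adj_def hc_vertex_def by blast
  ultimately show thesis using that by blast
qed

lemma hc_subgraph_edgeD:
  assumes "hc_subgraph n V E" "{v, w} \<in> E"
  shows "v \<in> V" "w \<in> V" "\<exists>j\<in>{1..n}. w = flip_coord v j"
proof -
  obtain x y where xy: "{v, w} = {x, y}" "x \<in> V" "y \<in> V" "hc_adj n x y"
    using assms unfolding hc_subgraph_def by blast
  have "hc_adj n y x"
    using xy(4) unfolding hc_adj_def by (simp add: Un_commute)
  with xy have "v \<in> V \<and> w \<in> V \<and> hc_adj n v w"
    unfolding doubleton_eq_iff by blast
  then show "v \<in> V" "w \<in> V" "\<exists>j\<in>{1..n}. w = flip_coord v j"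
    by (blast elim: hc_adj_flip_coord)+
qed

lemma hc_subgraph_direction:
  assumes "hc_subgraph n V E" "{v, w} \<in> E"
  shows "direction v w \<in> {1..n}"
  using hc_subgraph_edgeD(3)[OF assms] by auto

lemma hc_subgraph_finite:
  assumes "hc_subgraph n V E"
  shows "finite V" "finite E"
proof -
  have "V \<subseteq> Pow {1..n}"
    using assms unfolding hc_subgraph_def hc_vertex_def by blast
  then show "finite V"
    by (rule finite_subset) simp
  have "E \<subseteq> Pow V"
  proof
    fix e assume "e \<in> E"
    then obtain x y where "e = {x, y}" "x \<in> V" "y \<in> V"
      using assms unfolding hc_subgraph_def by blast
    then show "e \<in> Pow V" by simp
  qed
  then show "finite E"
    using \<open>finite V\<close> by (simp add: finite_subset)
qed

definition edge_dirs :: "nat set list \<Rightarrow> nat list" where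
  "edge_dirs xs = map (\<lambda>i. direction (xs ! i) (xs ! Suc i)) [0..<length xs - 1]"

lemma length_edge_dirs [simp]: "length (edge_dirs xs) = length xs - 1"
  by (simp add: edge_dirs_def)

lemma edge_dirs_snoc:
  assumes "xs \<noteq> []"
  shows "edge_dirs (xs @ [v]) = edge_dirs xs @ [direction (last xs) v]"
proof -
  obtain m where "length xs = Suc m" using assms by (cases xs) auto
  then show ?thesis using assms by (simp add: edge_dirs_def nth_append last_conv_nth)
qed

lemma inc_geodesic_iff:
  "inc_geodesic V E xs \<longleftrightarrow> xs \<noteq> [] \<and> set xs \<subseteq> V \<and>
     (\<forall>i. Suc i < length xs \<longrightarrow> {xs ! i, xs ! Suc i} \<in> E) \<and> sorted_wrt (<) (edge_dirs xs)"
  by (auto simp: inc_geodesic_def sorted_wrt_iff_nth_Suc_transp edge_dirs_def)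

lemma inc_geodesic_snoc:
  assumes "inc_geodesic V E xs" "v \<in> V" "{last xs, v} \<in> E"
    and "\<forall>d \<in> set (edge_dirs xs). d < direction (last xs) v"
  shows "inc_geodesic V E (xs @ [v])"
proof -
  have "xs \<noteq> []" using assms(1) by (simp add: inc_geodesic_def)
  have "{(xs @ [v]) ! i, (xs @ [v]) ! Suc i} \<in> E" if "Suc i < length (xs @ [v])" for i
  proof (cases "Suc i < length xs")
    case True
    then show ?thesis using assms(1) by (simp add: inc_geodesic_iff nth_append)
  next
    case False
    then have "i = length xs - 1" using that by simp
    then show ?thesis using assms(3) \<open>xs \<noteq> []\<close> by (simp add: nth_append last_conv_nth)
  qed
  then show ?thesis
    using assms \<open>xs \<noteq> []\<close> by (auto simp: inc_geodesic_iff edge_dirs_snoc sorted_wrt_append)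
qed

lemma set_edge_dirs_subset:
  assumes "hc_subgraph n V E" "inc_geodesic V E xs"
  shows "set (edge_dirs xs) \<subseteq> {1..n}"
  using assms hc_subgraph_direction by (fastforce simp: edge_dirs_def inc_geodesic_iff)

lemma inc_geodesic_length_le:
  assumes "hc_subgraph n V E" "inc_geodesic V E xs"
  shows "length xs - 1 \<le> n"
proof -
  have "distinct (edge_dirs xs)"
    using assms(2) by (simp add: inc_geodesic_iff strict_sorted_iff)
  then have "length xs - 1 = card (set (edge_dirs xs))"
    by (simp add: distinct_card)
  also have "\<dots> \<le> card {1..n}"
    using set_edge_dirs_subset[OF assms] by (intro card_mono) auto
  finally show ?thesis by simp
qed

lemma max_inc_len_ge:
  assumes "hc_subgraph n V E" "inc_geodesic V E xs"
  shows "length xs - 1 \<le> max_inc_len V E (last xs)"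
proof -
  have "finite {length ys - 1 | ys. inc_geodesic V E ys \<and> last ys = last xs}"
    by (rule finite_subset[of _ "{..n}"]) (use inc_geodesic_length_le[OF assms(1)] in auto)
  then show ?thesis
    unfolding max_inc_len_def by (rule Max_ge) (use assms(2) in blast)
qed

text \<open>Dynamic programming over the directions: an increasing geodesic using directions
  at most \<open>k + 1\<close> either avoids direction \<open>k + 1\<close> or ends with an edge of that direction.\<close>

primrec inc_len_upto :: "nat set set set \<Rightarrow> nat \<Rightarrow> nat set \<Rightarrow> nat" where
  "inc_len_upto E 0 v = 0"
| "inc_len_upto E (Suc k) v =
     (if {v, flip_coord v (Suc k)} \<in> E
      then max (inc_len_upto E k v) (inc_len_upto E k (flip_coord v (Suc k)) + 1)
      else inc_len_upto E k v)"

lemma inc_len_upto_geodesic: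
  assumes "hc_subgraph n V E" "v \<in> V"
  shows "\<exists>xs. inc_geodesic V E xs \<and> last xs = v \<and> length xs = Suc (inc_len_upto E k v) \<and>
           set (edge_dirs xs) \<subseteq> {..k}"
  using assms(2)
proof (induction k arbitrary: v)
  case 0
  then show ?case
    by (intro exI[of _ "[v]"]) (auto simp: inc_geodesic_def edge_dirs_def)
next
  case (Suc k)
  let ?w = "flip_coord v (Suc k)"
  show ?case
  proof (cases "{v, ?w} \<in> E \<and> inc_len_upto E k v < inc_len_upto E k ?w + 1")
    case False
    then have unchanged: "inc_len_upto E (Suc k) v = inc_len_upto E k v" by auto
    obtain xs where xs: "inc_geodesic V E xs" "last xs = v"
      "length xs = Suc (inc_len_upto E k v)" "set (edge_dirs xs) \<subseteq> {..k}"
      using Suc.IH[OF Suc.prems] by blast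
    have "length xs = Suc (inc_len_upto E (Suc k) v)"
      using xs(3) by (simp only: unchanged)
    moreover have "set (edge_dirs xs) \<subseteq> {..Suc k}"
      using xs(4) by auto
    ultimately show ?thesis using xs by blast
  next
    case True
    then have "?w \<in> V" using hc_subgraph_edgeD(2)[OF assms(1)] by blast
    then obtain xs where xs: "inc_geodesic V E xs" "last xs = ?w"
      "length xs = Suc (inc_len_upto E k ?w)" "set (edge_dirs xs) \<subseteq> {..k}"
      using Suc.IH by blast
    then have "xs \<noteq> []" by auto
    have "inc_geodesic V E (xs @ [v])"
      using xs True Suc.prems
      by (intro inc_geodesic_snoc) (auto simp: insert_commute le_imp_less_Suc subset_eq)
    moreover have "set (edge_dirs (xs @ [v])) \<subseteq> {..Suc k}"
      using xs \<open>xs \<noteq> []\<close> by (auto simp: edge_dirs_snoc)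
    ultimately show ?thesis
      using xs True by (intro exI[of _ "xs @ [v]"]) auto
  qed
qed

lemma inc_len_upto_le_max_inc_len:
  assumes "hc_subgraph n V E" "v \<in> V"
  shows "inc_len_upto E k v \<le> max_inc_len V E v"
proof -
  obtain xs where "inc_geodesic V E xs" "last xs = v" "length xs = Suc (inc_len_upto E k v)"
    using inc_len_upto_geodesic[OF assms] by blast
  then show ?thesis using max_inc_len_ge[OF assms(1)] by fastforce
qed

definition dir_vertices :: "nat set set \<Rightarrow> nat set set set \<Rightarrow> nat \<Rightarrow> nat set set" where
  "dir_vertices V E j = {v \<in> V. {v, flip_coord v j} \<in> E}"

lemma card_ordered_pairs_of_doubletons:
  assumes "finite E" "\<And>e. e \<in> E \<Longrightarrow> \<exists>x y. x \<noteq> y \<and> e = {x, y}"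
  shows "card {(v, w). {v, w} \<in> E} = 2 * card E"
proof -
  have pairs: "finite {(v, w). {v, w} = e} \<and> card {(v, w). {v, w} = e} = 2" if e: "e \<in> E" for e
  proof -
    obtain x y where "x \<noteq> y" "e = {x, y}" using assms(2)[OF e] by blast
    then have "{(v, w). {v, w} = e} = {(x, y), (y, x)}" by (auto simp: doubleton_eq_iff)
    then show ?thesis using \<open>x \<noteq> y\<close> by simp
  qed
  have "card {(v, w). {v, w} \<in> E} = card (\<Union>e\<in>E. {(v, w). {v, w} = e})"
    by (rule arg_cong[where f = card]) blast
  also have "\<dots> = (\<Sum>e\<in>E. card {(v, w). {v, w} = e})"
    by (rule card_UN_disjoint) (use assms(1) pairs in auto)
  also have "\<dots> = (\<Sum>e\<in>E. 2)"
    using pairs by (intro sum.cong) auto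
  finally show ?thesis by simp
qed

lemma hc_subgraph_edge_doubleton:
  assumes "hc_subgraph n V E" "e \<in> E"
  shows "\<exists>x y. x \<noteq> y \<and> e = {x, y}"
proof -
  obtain x y where "e = {x, y}" "hc_adj n x y"
    using assms unfolding hc_subgraph_def by blast
  moreover have "x \<noteq> y"
    using \<open>hc_adj n x y\<close> unfolding hc_adj_def by auto
  ultimately show ?thesis by blast
qed

lemma two_card_edges_eq_sum_dir_vertices:
  assumes "hc_subgraph n V E"
  shows "2 * card E = (\<Sum>j\<in>{1..n}. card (dir_vertices V E j))"
proof -
  let ?f = "\<lambda>(j, v). (v, flip_coord v j)"
  let ?B = "SIGMA j:{1..n}. dir_vertices V E j"
  have "inj_on ?f ?B"
    by (rule inj_onI) auto
  moreover have "?f ` ?B = {(v, w). {v, w} \<in> E}"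
  proof
    show "?f ` ?B \<subseteq> {(v, w). {v, w} \<in> E}"
      by (auto simp: dir_vertices_def)
    show "{(v, w). {v, w} \<in> E} \<subseteq> ?f ` ?B"
    proof clarify
      fix v w assume "{v, w} \<in> E"
      then obtain j where "j \<in> {1..n}" "w = flip_coord v j" "v \<in> V"
        using hc_subgraph_edgeD[OF assms] by blast
      with \<open>{v, w} \<in> E\<close> show "(v, w) \<in> ?f ` ?B"
        by (auto simp: dir_vertices_def image_iff)
    qed
  qed
  ultimately have "card {(v, w). {v, w} \<in> E} = card ?B"
    using card_image by fastforce
  also have "\<dots> = (\<Sum>j\<in>{1..n}. card (dir_vertices V E j))"
    using hc_subgraph_finite(1)[OF assms] by (simp add: dir_vertices_def)
  finally show ?thesis
    using card_ordered_pairs_of_doubletons[OF hc_subgraph_finite(2)[OF assms]]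
      hc_subgraph_edge_doubleton[OF assms] by simp
qed

lemma sum_le_sum_involution:
  fixes f g :: "'a \<Rightarrow> 'b::{linordered_cancel_ab_semigroup_add, ordered_comm_monoid_add}"
  assumes "finite S" "\<And>v. v \<in> S \<Longrightarrow> s v \<in> S" "\<And>v. v \<in> S \<Longrightarrow> s (s v) = v"
    and "\<And>v. v \<in> S \<Longrightarrow> f v + f (s v) \<le> g v + g (s v)"
  shows "sum f S \<le> sum g S"
proof -
  have reindex: "sum (h \<circ> s) S = sum h S" for h :: "'a \<Rightarrow> 'b"
    by (rule sum.reindex_bij_witness[of _ s s]) (use assms(2,3) in auto)
  have "sum f S + sum f S = (\<Sum>v\<in>S. f v + f (s v))"
    using reindex[of f] by (simp add: sum.distrib)
  also have "\<dots> \<le> (\<Sum>v\<in>S. g v + g (s v))"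
    by (rule sum_mono) (rule assms(4))
  also have "\<dots> = sum g S + sum g S"
    using reindex[of g] by (simp add: sum.distrib)
  finally show ?thesis
    by (meson add_strict_mono not_le)
qed

lemma sum_inc_len_upto_Suc:
  assumes "hc_subgraph n V E"
  shows "(\<Sum>v\<in>V. inc_len_upto E k v) + card (dir_vertices V E (Suc k))
           \<le> (\<Sum>v\<in>V. inc_len_upto E (Suc k) v)"
proof -
  let ?S = "dir_vertices V E (Suc k)"
  have "finite V" using hc_subgraph_finite(1)[OF assms] .
  have "?S \<subseteq> V" by (auto simp: dir_vertices_def)
  have flip_S: "flip_coord v (Suc k) \<in> ?S" if "v \<in> ?S" for v
    using that hc_subgraph_edgeD(2)[OF assms]
    by (auto simp: dir_vertices_def insert_commute)
  have "(\<Sum>v\<in>?S. inc_len_upto E k v + 1) \<le> (\<Sum>v\<in>?S. inc_len_upto E (Suc k) v)"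
    using \<open>finite V\<close> \<open>?S \<subseteq> V\<close> flip_S
    by (intro sum_le_sum_involution[where s = "\<lambda>v. flip_coord v (Suc k)"])
       (auto simp: dir_vertices_def insert_commute finite_subset)
  moreover have "(\<Sum>v\<in>V - ?S. inc_len_upto E k v) = (\<Sum>v\<in>V - ?S. inc_len_upto E (Suc k) v)"
    by (intro sum.cong) (auto simp: dir_vertices_def)
  ultimately show ?thesis
    using sum.subset_diff[OF \<open>?S \<subseteq> V\<close> \<open>finite V\<close>, of "inc_len_upto E k"]
      sum.subset_diff[OF \<open>?S \<subseteq> V\<close> \<open>finite V\<close>, of "inc_len_upto E (Suc k)"]
    by (simp add: sum_Suc del: inc_len_upto.simps)
qed

lemma sum_card_dir_vertices_le:
  assumes "hc_subgraph n V E"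
  shows "(\<Sum>j\<in>{1..k}. card (dir_vertices V E j)) \<le> (\<Sum>v\<in>V. inc_len_upto E k v)"
proof (induction k)
  case 0
  then show ?case by simp
next
  case (Suc k)
  then show ?case using sum_inc_len_upto_Suc[OF assms, of k] by simp
qed

theorem theorem4:
  fixes n :: nat and V :: "nat set set" and E :: "nat set set set"
  assumes "hc_subgraph n V E" and "V \<noteq> {}"
  shows "(\<Sum>v\<in>V. real (max_inc_len V E v)) \<ge> avg_degree V E * real (card V)"
proof -
  have "card V > 0"
    using hc_subgraph_finite(1)[OF assms(1)] assms(2) by (simp add: card_gt_0_iff)
  then have "avg_degree V E * real (card V) = real (2 * card E)"
    unfolding avg_degree_def by simp
  also have "2 * card E \<le> (\<Sum>v\<in>V. inc_len_upto E n v)"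
    using two_card_edges_eq_sum_dir_vertices[OF assms(1)] sum_card_dir_vertices_le[OF assms(1)]
    by simp
  also have "\<dots> \<le> (\<Sum>v\<in>V. max_inc_len V E v)"
    using inc_len_upto_le_max_inc_len[OF assms(1)] by (intro sum_mono) simp
  finally show ?thesis
    by (simp only: of_nat_sum)
qed

end
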